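(* Let $s\in\mathbb{R}$ and let $f:\mathbb{R}^n\to\overline{\mathbb{R}}$ be variationally $s$-convex at $\bar x\in\operatorname{dom}f$ for $\bar v\in\partial f(\bar x)$. Then there exist $\varepsilon>0$ and the $f$-attentive $\varepsilon$-localization $T_\varepsilon$ of $\partial f$ around $(\bar x,\bar v)$ such that $d^2f(x|v)(w)\ge s\|w\|^2$ for all $(x,v)\in\operatorname{gph}T_\varepsilon$ and all $w\in\mathbb{R}^n$.
   Context: $f$ is proper l.s.c.; $\partial f$ is the limiting subdifferential. Variational $s$-convexity at $\bar x$ for $\bar v$: $f(\bar x)$ finite and there exist a function $\hat f$ with $\hat f-\frac s2\|\cdot\|^2$ convex, convex neighborhoods $U\ni\bar x$, $V\ni\bar v$ and $\varepsilon>0$ with $\hat f\le f$ on $U$, $(U\times V)\cap\operatorname{gph}\partial\hat f=(U_\varepsilon\times V)\cap\operatorname{gph}\partial f$ ($U_\varepsilon=\{x\in U:f(x)<f(\bar x)+\varepsilon\}$), and $\hat f=f$ at common elements. $\operatorname{gph}T_\varepsilon=\{(x,v)\in\operatorname{gph}\partial f:\|x-\bar x\|<\varepsilon,\|v-\bar v\|<\varepsilon,f(x)<f(\bar x)+\varepsilon\}$. $d^2f(x|v)(w)=\liminf_{t\downarrow0,w'\to w}\frac{f(x+tw')-f(x)-t\langle v,w'\rangle}{\frac12t^2}$. *)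

theory Defs
  imports "HOL-Analysis.Analysis"
begin

definition edom :: "(real^'n \<Rightarrow> ereal) \<Rightarrow> (real^'n) set" where
  "edom f = {x. f x < \<infinity>}"

definition proper_fun :: "(real^'n \<Rightarrow> ereal) \<Rightarrow> bool" where
  "proper_fun f \<longleftrightarrow> (\<forall>x. f x \<noteq> -\<infinity>) \<and> (\<exists>x. f x \<noteq> \<infinity>)"

definition lsc_fun :: "(real^'n \<Rightarrow> ereal) \<Rightarrow> bool" where
  "lsc_fun f \<longleftrightarrow> (\<forall>x c. c < f x \<longrightarrow> (\<forall>\<^sub>F y in nhds x. c < f y))"

definition econvex :: "(real^'n \<Rightarrow> ereal) \<Rightarrow> bool" where
  "econvex g \<longleftrightarrow> convex {(x, r::real). g x \<le> ereal r}"

(* regular (Frechet) subdifferential: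
   v \<in> \<partial>^ f(x) iff f x finite and
   liminf_{x'\<rightarrow>x, x'\<noteq>x} (f x' - f x - <v, x'-x>) / |x'-x| \<ge> 0 (written in eps-delta form) *)
definition regular_subdiff :: "(real^'n \<Rightarrow> ereal) \<Rightarrow> real^'n \<Rightarrow> (real^'n) set" where
  "regular_subdiff f x = {v. \<bar>f x\<bar> \<noteq> \<infinity> \<and>
     (\<forall>e>0. \<exists>d>0. \<forall>y. norm (y - x) < d \<longrightarrow>
        f y \<ge> f x + ereal (v \<bullet> (y - x) - e * norm (y - x)))}"

definition limiting_subdiff :: "(real^'n \<Rightarrow> ereal) \<Rightarrow> real^'n \<Rightarrow> (real^'n) set" where
  "limiting_subdiff f x = {v. \<bar>f x\<bar> \<noteq> \<infinity> \<and>
     (\<exists>xs vs. xs \<longlonglongrightarrow> x \<and> (\<lambda>k. f (xs k)) \<longlonglongrightarrow> f x \<and> vs \<longlonglongrightarrow> v \<and>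
        (\<forall>k. vs k \<in> regular_subdiff f (xs k)))}"

definition gph_subdiff :: "(real^'n \<Rightarrow> ereal) \<Rightarrow> ((real^'n) \<times> (real^'n)) set" where
  "gph_subdiff f = {(x, v). v \<in> limiting_subdiff f x}"

definition var_s_convex ::
  "real \<Rightarrow> (real^'n \<Rightarrow> ereal) \<Rightarrow> real^'n \<Rightarrow> real^'n \<Rightarrow> bool" where
  "var_s_convex s f xb vb \<longleftrightarrow> \<bar>f xb\<bar> \<noteq> \<infinity> \<and>
     (\<exists>fh U V e. econvex (\<lambda>x. fh x - ereal (s / 2 * (norm x)\<^sup>2)) \<and>
        convex U \<and> convex V \<and> xb \<in> interior U \<and> vb \<in> interior V \<and> e > 0 \<and>
        (\<forall>x\<in>U. fh x \<le> f x) \<and>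
        (U \<times> V) \<inter> gph_subdiff fh
          = ({x\<in>U. f x < f xb + ereal e} \<times> V) \<inter> gph_subdiff f \<and>
        (\<forall>(x, v) \<in> (U \<times> V) \<inter> gph_subdiff fh. fh x = f x))"

definition gph_attentive_loc ::
  "(real^'n \<Rightarrow> ereal) \<Rightarrow> real^'n \<Rightarrow> real^'n \<Rightarrow> real \<Rightarrow> ((real^'n) \<times> (real^'n)) set" where
  "gph_attentive_loc f xb vb e = {(x, v). v \<in> limiting_subdiff f x \<and>
     norm (x - xb) < e \<and> norm (v - vb) < e \<and> f x < f xb + ereal e}"

definition second_subderiv ::
  "(real^'n \<Rightarrow> ereal) \<Rightarrow> real^'n \<Rightarrow> real^'n \<Rightarrow> real^'n \<Rightarrow> ereal" where
  "second_subderiv f x v w =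
     Liminf (at_right (0::real) \<times>\<^sub>F nhds w)
       (\<lambda>(t, w'). (f (x + t *\<^sub>R w') - f x - ereal (t * (v \<bullet> w'))) / ereal (t\<^sup>2 / 2))"

end

theory Submission
  imports Defs
begin

text \<open>
Near \<open>(xb, vb)\<close> the graph of \<open>\<partial>f\<close> coincides with that of \<open>\<partial>fh\<close>, where \<open>fh - s/2 \<parallel>\<cdot>\<parallel>\<^sup>2\<close>
is convex, \<open>fh \<le> f\<close> nearby and \<open>fh = f\<close> on the common graph. Subtracting the quadratic turns a
regular subgradient of \<open>fh\<close> into one of a convex function, which is a global subgradient; adding
the quadratic back, every regular and then, by a limiting argument, every limiting subgradient
\<open>v\<close> of \<open>fh\<close> at \<open>x\<close> gives the global minorant
\<open>fh y \<ge> fh x + \<langle>v, y - x\<rangle> + s/2 \<parallel>y - x\<parallel>\<^sup>2\<close>. Near \<open>x\<close> it also minorizes \<open>f\<close>, and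
inserting \<open>y = x + t w'\<close> into the difference quotients of \<open>d\<^sup>2f(x|v)(w)\<close> bounds them by
\<open>s \<parallel>w'\<parallel>\<^sup>2\<close>.
\<close>

lemma econvex_segment_le:
  fixes h :: "real^'n \<Rightarrow> ereal"
  assumes "econvex h" and "h x \<le> ereal a" and "h y \<le> ereal b" and "0 \<le> t" and "t \<le> 1"
  shows "h (x + t *\<^sub>R (y - x)) \<le> ereal ((1 - t) * a + t * b)"
proof -
  have "convex {(x, r::real). h x \<le> ereal r}"
    using assms(1) unfolding econvex_def .
  from convexD[OF this, of "(x, a)" "(y, b)" "1 - t" t] assms(2-5)
  have "(x + t *\<^sub>R (y - x), (1 - t) * a + t * b) \<in> {(x, r). h x \<le> ereal r}"
    by (simp add: algebra_simps)
  then show ?thesis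
    by simp
qed

lemma econvex_regular_subdiff_le_approx:
  fixes h :: "real^'n \<Rightarrow> ereal"
  assumes cvx: "econvex h" and u: "u \<in> regular_subdiff h x"
    and ha: "h x = ereal a" and hb: "h y \<le> ereal b" and e: "e > 0"
  shows "a + u \<bullet> (y - x) \<le> b + e"
proof (cases "y = x")
  case True
  with ha hb e show ?thesis by simp
next
  case False
  then have n: "norm (y - x) > 0"
    by simp
  with e have "e / norm (y - x) > 0"
    by simp
  moreover have "\<forall>e>0. \<exists>d>0. \<forall>z. norm (z - x) < d \<longrightarrow>
      h x + ereal (u \<bullet> (z - x) - e * norm (z - x)) \<le> h z"
    using u unfolding regular_subdiff_def by simp
  ultimately obtain d where d: "d > 0" and near: "\<And>z. norm (z - x) < d \<Longrightarrow>
      h x + ereal (u \<bullet> (z - x) - e / norm (y - x) * norm (z - x)) \<le> h z"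
    by blast
  define t where "t = min 1 (d / (2 * norm (y - x)))"
  have "t * norm (y - x) \<le> d / (2 * norm (y - x)) * norm (y - x)"
    by (intro mult_right_mono) (simp_all add: t_def)
  also have "\<dots> < d"
    using d n by simp
  finally have t: "0 < t" "t \<le> 1" "t * norm (y - x) < d"
    using d n by (simp_all add: t_def)
  have "ereal (a + (t * (u \<bullet> (y - x)) - e * t)) \<le> h (x + t *\<^sub>R (y - x))"
    using near[of "x + t *\<^sub>R (y - x)"] t n ha by simp
  also have "\<dots> \<le> ereal ((1 - t) * a + t * b)"
    using econvex_segment_le[OF cvx _ hb] ha t by simp
  finally have "a + (t * (u \<bullet> (y - x)) - e * t) \<le> (1 - t) * a + t * b"
    by (simp only: ereal_less_eq)
  then have "t * (u \<bullet> (y - x) - e) \<le> t * (b - a)"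
    by (simp add: algebra_simps)
  then have "u \<bullet> (y - x) - e \<le> b - a"
    using t(1) by (rule mult_left_le_imp_le)
  then show ?thesis
    by linarith
qed

lemma econvex_regular_subdiff_le:
  fixes h :: "real^'n \<Rightarrow> ereal"
  assumes cvx: "econvex h" and u: "u \<in> regular_subdiff h x"
  shows "h x + ereal (u \<bullet> (y - x)) \<le> h y"
proof (rule ereal_le_real)
  obtain a where ha: "h x = ereal a"
    using u by (cases "h x") (auto simp: regular_subdiff_def)
  fix b
  assume hb: "h y \<le> ereal b"
  have "a + u \<bullet> (y - x) \<le> b"
    using econvex_regular_subdiff_le_approx[OF cvx u ha hb] by (rule field_le_epsilon)
  with ha show "h x + ereal (u \<bullet> (y - x)) \<le> ereal b"
    by simp
qed

lemma quadratic_le_linear: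
  fixes s e r :: real
  assumes "0 \<le> r" and "r \<le> e / (\<bar>s\<bar> + 1)"
  shows "s * r\<^sup>2 \<le> e * r"
proof -
  have "\<bar>s\<bar> * r \<le> (\<bar>s\<bar> + 1) * (e / (\<bar>s\<bar> + 1))"
    using assms by (intro mult_mono) auto
  also have "\<dots> = e"
    by (simp add: add_pos_nonneg)
  finally have "\<bar>s\<bar> * r * r \<le> e * r"
    using assms(1) by (rule mult_right_mono)
  moreover have "s * r\<^sup>2 \<le> \<bar>s\<bar> * r * r"
    by (simp add: power2_eq_square mult.assoc mult_right_mono)
  ultimately show ?thesis
    by linarith
qed

lemma regular_subdiff_minus_quadratic:
  fixes g :: "real^'n \<Rightarrow> ereal"
  assumes u: "u \<in> regular_subdiff g x"
  shows "u - s *\<^sub>R x \<in> regular_subdiff (\<lambda>y. g y - ereal (s / 2 * (norm y)\<^sup>2)) x"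
proof -
  let ?q = "\<lambda>y. s / 2 * (norm y)\<^sup>2"
  obtain b where gb: "g x = ereal b"
    using u by (cases "g x") (auto simp: regular_subdiff_def)
  have reg: "\<forall>e>0. \<exists>d>0. \<forall>y. norm (y - x) < d \<longrightarrow>
      g x + ereal (u \<bullet> (y - x) - e * norm (y - x)) \<le> g y"
    using u unfolding regular_subdiff_def by simp
  have "\<exists>d>0. \<forall>y. norm (y - x) < d \<longrightarrow>
      g x - ereal (?q x) + ereal ((u - s *\<^sub>R x) \<bullet> (y - x) - e * norm (y - x)) \<le> g y - ereal (?q y)"
    if e: "e > 0" for e
  proof -
    from e have "e / 2 > 0"
      by simp
    with reg obtain d where d: "d > 0" and near: "\<And>y. norm (y - x) < d \<Longrightarrow>
        g x + ereal (u \<bullet> (y - x) - e / 2 * norm (y - x)) \<le> g y"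
      by blast
    define d' where "d' = min d (e / (\<bar>s\<bar> + 1))"
    have "g x - ereal (?q x) + ereal ((u - s *\<^sub>R x) \<bullet> (y - x) - e * norm (y - x)) \<le> g y - ereal (?q y)"
      if y: "norm (y - x) < d'" for y
    proof -
      have "s * (norm (y - x))\<^sup>2 \<le> e * norm (y - x)"
        using y by (intro quadratic_le_linear) (simp_all add: d'_def)
      then have quad: "s / 2 * (norm (y - x))\<^sup>2 \<le> e / 2 * norm (y - x)"
        by linarith
      have "?q y - ?q x - s * (x \<bullet> (y - x)) = s / 2 * (norm (y - x))\<^sup>2"
        by (simp add: power2_norm_eq_inner inner_diff_left inner_diff_right inner_commute algebra_simps)
      then have "b - ?q x + ((u - s *\<^sub>R x) \<bullet> (y - x) - e * norm (y - x)) + ?q y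
          \<le> b + (u \<bullet> (y - x) - e / 2 * norm (y - x))"
        using quad by (simp add: inner_diff_left)
      also have "ereal \<dots> \<le> g y"
        using near[of y] y gb by (simp add: d'_def)
      finally show ?thesis
        using gb by (simp add: ereal_le_minus)
    qed
    moreover have "d' > 0"
      using d e by (simp add: d'_def add_pos_nonneg)
    ultimately show ?thesis
      by blast
  qed
  then show ?thesis
    using gb unfolding regular_subdiff_def by simp
qed

lemma s_convex_regular_subdiff_minorant:
  fixes g :: "real^'n \<Rightarrow> ereal"
  assumes cvx: "econvex (\<lambda>x. g x - ereal (s / 2 * (norm x)\<^sup>2))"
    and u: "u \<in> regular_subdiff g x" and ga: "g x = ereal a"
  shows "ereal (a + u \<bullet> (y - x) + s / 2 * (norm (y - x))\<^sup>2) \<le> g y"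
proof -
  have "a + u \<bullet> (y - x) + s / 2 * (norm (y - x))\<^sup>2
      = a - s / 2 * (norm x)\<^sup>2 + (u - s *\<^sub>R x) \<bullet> (y - x) + s / 2 * (norm y)\<^sup>2"
    by (simp add: power2_norm_eq_inner inner_diff_left inner_diff_right inner_commute algebra_simps)
  also have "ereal \<dots> \<le> g y"
    using econvex_regular_subdiff_le[OF cvx regular_subdiff_minus_quadratic[OF u], of y] ga
    by (simp add: ereal_le_minus)
  finally show ?thesis .
qed

lemma s_convex_limiting_subdiff_minorant:
  fixes g :: "real^'n \<Rightarrow> ereal"
  assumes cvx: "econvex (\<lambda>x. g x - ereal (s / 2 * (norm x)\<^sup>2))"
    and v: "v \<in> limiting_subdiff g x"
  obtains a where "g x = ereal a"
    and "\<And>y. ereal (a + v \<bullet> (y - x) + s / 2 * (norm (y - x))\<^sup>2) \<le> g y"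
proof -
  from v obtain xs vs where fin: "\<bar>g x\<bar> \<noteq> \<infinity>" and xs: "xs \<longlonglongrightarrow> x"
    and gxs: "(\<lambda>k. g (xs k)) \<longlonglongrightarrow> g x" and vs: "vs \<longlonglongrightarrow> v"
    and reg: "\<And>k. vs k \<in> regular_subdiff g (xs k)"
    unfolding limiting_subdiff_def mem_Collect_eq by (elim conjE exE) (rule that, blast+)
  obtain a where ga: "g x = ereal a"
    using fin by (cases "g x") auto
  define as where "as k = real_of_ereal (g (xs k))" for k
  have gas: "g (xs k) = ereal (as k)" for k
    using reg[of k] unfolding regular_subdiff_def as_def by (cases "g (xs k)") auto
  have "(\<lambda>k. ereal (as k)) \<longlonglongrightarrow> ereal a"
    using gxs ga gas by simp
  then have as: "as \<longlonglongrightarrow> a"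
    by (simp add: lim_ereal)
  have "ereal (a + v \<bullet> (y - x) + s / 2 * (norm (y - x))\<^sup>2) \<le> g y" for y
  proof (rule tendsto_le[OF trivial_limit_sequentially tendsto_const])
    show "(\<lambda>k. ereal (as k + vs k \<bullet> (y - xs k) + s / 2 * (norm (y - xs k))\<^sup>2))
        \<longlonglongrightarrow> ereal (a + v \<bullet> (y - x) + s / 2 * (norm (y - x))\<^sup>2)"
      unfolding lim_ereal by (intro tendsto_intros as vs xs)
    show "\<forall>\<^sub>F k in sequentially.
        ereal (as k + vs k \<bullet> (y - xs k) + s / 2 * (norm (y - xs k))\<^sup>2) \<le> g y"
      using s_convex_regular_subdiff_minorant[OF cvx reg gas] by simp
  qed
  with ga show ?thesis
    by (rule that)
qed

lemma second_order_quotient_ge: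
  fixes f :: "real^'n \<Rightarrow> ereal"
  assumes fx: "f x = ereal a" and t: "t > 0"
    and bd: "ereal (a + v \<bullet> (t *\<^sub>R w) + s / 2 * (norm (t *\<^sub>R w))\<^sup>2) \<le> f (x + t *\<^sub>R w)"
  shows "ereal (s * (norm w)\<^sup>2) \<le> (f (x + t *\<^sub>R w) - f x - ereal (t * (v \<bullet> w))) / ereal (t\<^sup>2 / 2)"
proof -
  have "ereal (s / 2 * (t\<^sup>2 * (norm w)\<^sup>2))
      = ereal (a + v \<bullet> (t *\<^sub>R w) + s / 2 * (norm (t *\<^sub>R w))\<^sup>2) - ereal a - ereal (t * (v \<bullet> w))"
    using t by (simp add: power_mult_distrib)
  also have "\<dots> \<le> f (x + t *\<^sub>R w) - f x - ereal (t * (v \<bullet> w))"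
    using bd fx by (intro ereal_minus_mono) auto
  finally have num: "ereal (s / 2 * (t\<^sup>2 * (norm w)\<^sup>2)) \<le> f (x + t *\<^sub>R w) - f x - ereal (t * (v \<bullet> w))" .
  have "ereal (s * (norm w)\<^sup>2) = ereal (s / 2 * (t\<^sup>2 * (norm w)\<^sup>2)) / ereal (t\<^sup>2 / 2)"
    using t by (simp add: divide_ereal_def field_simps)
  also have "\<dots> \<le> (f (x + t *\<^sub>R w) - f x - ereal (t * (v \<bullet> w))) / ereal (t\<^sup>2 / 2)"
    using num t by (intro ereal_divide_right_mono) auto
  finally show ?thesis .
qed

lemma second_subderiv_ge_of_local_minorant:
  fixes f :: "real^'n \<Rightarrow> ereal"
  assumes fx: "f x = ereal a" and r: "r > 0"
    and bd: "\<And>y. norm (y - x) < r \<Longrightarrow>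
      ereal (a + v \<bullet> (y - x) + s / 2 * (norm (y - x))\<^sup>2) \<le> f y"
  shows "ereal (s * (norm w)\<^sup>2) \<le> second_subderiv f x v w"
proof -
  let ?F = "at_right (0::real) \<times>\<^sub>F nhds w"
  let ?G = "\<lambda>p. ereal (s * (norm (snd p))\<^sup>2)"
  let ?Q = "(\<lambda>(t, w'). (f (x + t *\<^sub>R w') - f x - ereal (t * (v \<bullet> w'))) / ereal (t\<^sup>2 / 2))"
  have nw: "norm w + 1 > 0"
    by (simp add: add_nonneg_pos)
  define b where "b = r / (norm w + 1)"
  have b: "b > 0"
    using r nw by (simp add: b_def)
  have "\<forall>\<^sub>F p in ?F. ?G p \<le> ?Q p"
    unfolding eventually_prod_filter
  proof (intro exI conjI allI impI)
    show "\<forall>\<^sub>F t in at_right 0. 0 < t \<and> t < b"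
      using eventually_at_right_real[OF b] by simp
    show "\<forall>\<^sub>F w' in nhds w. dist w' w < 1"
      using eventually_nhds_metric by (metis zero_less_one)
    fix t :: real and w' :: "real^'n"
    assume t: "0 < t \<and> t < b" and w': "dist w' w < 1"
    have "norm (t *\<^sub>R w') \<le> t * (norm w + 1)"
      using t w' norm_triangle_ineq2[of w' w] by (simp add: dist_norm mult_left_mono)
    also have "\<dots> < b * (norm w + 1)"
      using t nw by (intro mult_strict_right_mono) auto
    also have "\<dots> = r"
      using nw by (simp add: b_def)
    finally have "norm ((x + t *\<^sub>R w') - x) < r"
      by simp
    from bd[OF this] have "ereal (a + v \<bullet> (t *\<^sub>R w') + s / 2 * (norm (t *\<^sub>R w'))\<^sup>2) \<le> f (x + t *\<^sub>R w')"
      by simp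
    with fx t have "ereal (s * (norm w')\<^sup>2) \<le> (f (x + t *\<^sub>R w') - f x - ereal (t * (v \<bullet> w'))) / ereal (t\<^sup>2 / 2)"
      by (intro second_order_quotient_ge) auto
    then show "?G (t, w') \<le> ?Q (t, w')"
      by simp
  qed
  then have "Liminf ?F ?G \<le> second_subderiv f x v w"
    unfolding second_subderiv_def by (rule Liminf_mono)
  moreover have "(?G \<longlongrightarrow> ereal (s * (norm w)\<^sup>2)) ?F"
    unfolding lim_ereal by (intro tendsto_intros filterlim_snd)
  then have "Liminf ?F ?G = ereal (s * (norm w)\<^sup>2)"
    by (intro lim_imp_Liminf) (simp_all add: prod_filter_eq_bot)
  ultimately show ?thesis
    by simp
qed

lemma var_s_convex_attentive_loc:
  fixes f :: "real^'n \<Rightarrow> ereal"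
  assumes "var_s_convex s f xb vb"
  obtains fh e r where "econvex (\<lambda>x. fh x - ereal (s / 2 * (norm x)\<^sup>2))" and "e > 0" and "r > 0"
    and "\<And>x v. (x, v) \<in> gph_attentive_loc f xb vb e \<Longrightarrow>
      v \<in> limiting_subdiff fh x \<and> fh x = f x \<and> (\<forall>y. norm (y - x) < r \<longrightarrow> fh y \<le> f y)"
proof -
  from assms obtain fh U V e0 where cvx: "econvex (\<lambda>x. fh x - ereal (s / 2 * (norm x)\<^sup>2))"
    and U: "xb \<in> interior U" and V: "vb \<in> interior V" and e0: "e0 > 0"
    and le: "\<forall>x\<in>U. fh x \<le> f x"
    and gph: "(U \<times> V) \<inter> gph_subdiff fh = ({x\<in>U. f x < f xb + ereal e0} \<times> V) \<inter> gph_subdiff f"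
    and same: "\<forall>(x, v) \<in> (U \<times> V) \<inter> gph_subdiff fh. fh x = f x"
    unfolding var_s_convex_def by blast
  obtain r1 where r1: "r1 > 0" "ball xb r1 \<subseteq> U"
    using U mem_interior by blast
  obtain r2 where r2: "r2 > 0" "ball vb r2 \<subseteq> V"
    using V mem_interior by blast
  define e where "e = min (r1 / 2) (min r2 e0)"
  have "v \<in> limiting_subdiff fh x \<and> fh x = f x \<and> (\<forall>y. norm (y - x) < r1 / 2 \<longrightarrow> fh y \<le> f y)"
    if "(x, v) \<in> gph_attentive_loc f xb vb e" for x v
  proof -
    from that have v: "v \<in> limiting_subdiff f x" and x: "norm (x - xb) < e"
      and v': "norm (v - vb) < e" and fx: "f x < f xb + ereal e"
      unfolding gph_attentive_loc_def by auto
    have "e \<le> e0"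
      by (simp add: e_def)
    then have "f xb + ereal e \<le> f xb + ereal e0"
      by (intro add_left_mono) simp
    with fx have "f x < f xb + ereal e0"
      by (rule order_less_le_trans)
    with v x v' r1 r2 have "(x, v) \<in> ({x\<in>U. f x < f xb + ereal e0} \<times> V) \<inter> gph_subdiff f"
      by (auto simp: e_def dist_norm norm_minus_commute gph_subdiff_def)
    then have "(x, v) \<in> (U \<times> V) \<inter> gph_subdiff fh"
      using gph by simp
    moreover have "y \<in> U" if "norm (y - x) < r1 / 2" for y
      using that x r1 norm_triangle_ineq[of "y - x" "x - xb"]
      by (auto simp: e_def dist_norm norm_minus_commute)
    ultimately show ?thesis
      using same le by (auto simp: gph_subdiff_def)
  qed
  moreover have "e > 0" "r1 / 2 > 0"
    using r1 r2 e0 by (simp_all add: e_def)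
  ultimately show ?thesis
    using cvx that by blast
qed

lemma second_subderiv_ge_of_s_convex_support:
  fixes f fh :: "real^'n \<Rightarrow> ereal"
  assumes cvx: "econvex (\<lambda>x. fh x - ereal (s / 2 * (norm x)\<^sup>2))"
    and v: "v \<in> limiting_subdiff fh x" and eq: "fh x = f x"
    and r: "r > 0" and le: "\<And>y. norm (y - x) < r \<Longrightarrow> fh y \<le> f y"
  shows "ereal (s * (norm w)\<^sup>2) \<le> second_subderiv f x v w"
proof -
  obtain a where "fh x = ereal a"
    and minorant: "\<And>y. ereal (a + v \<bullet> (y - x) + s / 2 * (norm (y - x))\<^sup>2) \<le> fh y"
    using s_convex_limiting_subdiff_minorant[OF cvx v] by blast
  show ?thesis
  proof (rule second_subderiv_ge_of_local_minorant[OF _ r])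
    show "f x = ereal a"
      using eq \<open>fh x = ereal a\<close> by simp
    show "ereal (a + v \<bullet> (y - x) + s / 2 * (norm (y - x))\<^sup>2) \<le> f y" if "norm (y - x) < r" for y
      using minorant le[OF that] by (rule order_trans)
  qed
qed

theorem corollary3p6:
  fixes s :: real and f :: "real^'n \<Rightarrow> ereal" and xb vb :: "real^'n"
  assumes "proper_fun f" and "lsc_fun f"
    and "xb \<in> edom f" and "vb \<in> limiting_subdiff f xb"
    and "var_s_convex s f xb vb"
  shows "\<exists>e>0. \<forall>(x, v) \<in> gph_attentive_loc f xb vb e. \<forall>w.
           second_subderiv f x v w \<ge> ereal (s * (norm w)\<^sup>2)"
proof -
  obtain fh e r where cvx: "econvex (\<lambda>x. fh x - ereal (s / 2 * (norm x)\<^sup>2))"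
    and "e > 0" and "r > 0"
    and loc: "\<And>x v. (x, v) \<in> gph_attentive_loc f xb vb e \<Longrightarrow>
      v \<in> limiting_subdiff fh x \<and> fh x = f x \<and> (\<forall>y. norm (y - x) < r \<longrightarrow> fh y \<le> f y)"
    using var_s_convex_attentive_loc[OF assms(5)] by blast
  have "ereal (s * (norm w)\<^sup>2) \<le> second_subderiv f x v w"
    if "(x, v) \<in> gph_attentive_loc f xb vb e" for x v w
    using loc[OF that] \<open>r > 0\<close> by (intro second_subderiv_ge_of_s_convex_support[OF cvx]) auto
  with \<open>e > 0\<close> show ?thesis
    by auto
qed

end
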